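(* Let $d\ge1$, $s\in(0,1)$, $0<\lambda\le\Lambda$ and $M\ge0$. There exists $\beta>0$, depending only on $d,s,\lambda,\Lambda,M$, with the following property. Let $K:\mathbb{R}^d\to\mathbb{R}$ be a measurable kernel with $\lambda|y|^{-d-s}\le K(y)\le\Lambda|y|^{-d-s}$ and $K(y)=K(-y)$ for all $y\ne0$. Let $E\subset\mathbb{R}^d$ be a Borel set, let $B=B_r(x_0)\subset\mathbb{R}^d\setminus E$ be an open ball, and let $x\in\partial E\cap\partial B$. If $|E\cap B_{2r}(x_0)|\le\beta|B_{2r}(x_0)|$, then $H_{K,E}(x)\ge(M+1)r^{-s}$.
   Context: $B_\rho(x)$ is the open ball of radius $\rho$ centred at $x$, and $|F|$ denotes Lebesgue measure. Put $\tilde\chi_E=\chi_{\mathbb{R}^d\setminus E}-\chi_E$. Under the stated hypotheses (an exterior ball $B$ touching $\partial E$ at $x$), the limit \[ H_{K,E}(x)=\lim_{\varepsilon\to0^+}\int_{\mathbb{R}^d\setminus B_\varepsilon(x)}\tilde\chi_E(y)K(x-y)\,dy \] exists in $(-\infty,+\infty]$. *)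

theory Defs
  imports "HOL-Analysis.Analysis"
begin

definition chi_tilde :: "'a set \<Rightarrow> 'a \<Rightarrow> real" where
  "chi_tilde E y = (if y \<in> E then -1 else 1)"

definition H_trunc :: "('a::euclidean_space \<Rightarrow> real) \<Rightarrow> 'a set \<Rightarrow> 'a \<Rightarrow> real \<Rightarrow> real" where
  "H_trunc K E x \<epsilon> =
     set_lebesgue_integral lebesgue (- ball x \<epsilon>) (\<lambda>y. chi_tilde E y * K (x - y))"

definition H_KE :: "('a::euclidean_space \<Rightarrow> real) \<Rightarrow> 'a set \<Rightarrow> 'a \<Rightarrow> ereal" where
  "H_KE K E x = Lim (at_right 0) (\<lambda>\<epsilon>. ereal (H_trunc K E x \<epsilon>))"

end

theory Submission
  imports Defs
begin

text \<open>
  The substitution \<open>u = x - y\<close> moves the touching point to the origin: \<open>E\<close> becomes a set \<open>G\<close>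
  disjoint from a ball \<open>B(c, r)\<close> with \<open>|c| = r\<close>, and \<open>H_KE K E x\<close> becomes the limit of the
  integrals of \<open>chi_tilde G u * K u\<close> over \<open>|u| \<ge> \<epsilon>\<close>. Split these integrals at a radius \<open>\<rho>\<close>.
  On the annulus \<open>\<epsilon> \<le> |u| < \<rho>\<close>, averaging with the reflection \<open>u \<mapsto> -u\<close> (\<open>K\<close> is even) replaces
  \<open>chi_tilde G u\<close> by \<open>(chi_tilde G u + chi_tilde G (-u)) / 2\<close>, which is negative only if \<open>u\<close> and
  \<open>-u\<close> both lie in \<open>G\<close>, i.e. only on the lens outside \<open>B(c, r) \<union> B(-c, r)\<close>. Near \<open>0\<close> the lens
  lies in a slab of width \<open>|u|^2 / r\<close>, so a sum over dyadic shells bounds its contribution by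
  \<open>C \<rho>^(1-s) / r\<close>. Outside \<open>B(0, \<rho>)\<close> the kernel contributes at least \<open>c \<rho>^(-s)\<close>, of which at
  most twice the part on \<open>G\<close> is lost, and that part is at most
  \<open>C (\<rho>^(-d-s) |E \<inter> B(x0, 2r)| + r^(-s))\<close>. With \<open>\<rho> = T r\<close> for a small \<open>T\<close>, and then \<open>\<beta>\<close>
  small, the bound exceeds \<open>(M + 1) r^(-s)\<close>. The same symmetrization splits the truncations
  into a monotone part and a convergent part, so the limit defining \<open>H_KE K E x\<close> exists.
\<close>

abbreviation frac_kernel :: "real \<Rightarrow> 'a::euclidean_space \<Rightarrow> real" where
  "frac_kernel s u \<equiv> norm u powr - (real DIM('a) + s)"

lemma emeasure_lebesgue_ball:
  fixes c :: "'a::euclidean_space"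
  assumes "0 \<le> t"
  shows "emeasure lebesgue (ball c t) = ennreal (unit_ball_vol DIM('a) * t ^ DIM('a))"
  using emeasure_ball[OF assms] by simp

lemma measure_lebesgue_ball:
  fixes c :: "'a::euclidean_space"
  assumes "0 \<le> t"
  shows "measure lebesgue (ball c t) = unit_ball_vol DIM('a) * t ^ DIM('a)"
  unfolding measure_def emeasure_lebesgue_ball[OF assms] using assms by simp

section \<open>Integrals of the fractional kernel over dyadic shells\<close>

lemma ex_dyadic_scale_above:
  fixes x \<rho> :: real
  assumes "0 < \<rho>" "\<rho> \<le> x"
  obtains k :: nat where "2 ^ k * \<rho> \<le> x" "x < 2 ^ Suc k * \<rho>"
proof -
  obtain n :: nat where "x / \<rho> < 2 ^ n" using real_arch_pow[of 2 "x / \<rho>"] by auto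
  then have "x < 2 ^ n * \<rho>" using assms by (simp add: field_simps)
  moreover have "\<not> x < 2 ^ 0 * \<rho>" using assms by simp
  ultimately obtain k where "\<not> x < 2 ^ k * \<rho>" "x < 2 ^ Suc k * \<rho>"
    using ex_least_nat_less[of "\<lambda>k. x < 2 ^ k * \<rho>"] by blast
  then show ?thesis using that not_less by blast
qed

lemma ex_dyadic_scale_below:
  fixes x \<rho> :: real
  assumes "0 < x" "x < \<rho>"
  obtains k :: nat where "\<rho> / 2 ^ Suc k \<le> x" "x < \<rho> / 2 ^ k"
proof -
  obtain n :: nat where "\<rho> / x < 2 ^ n" using real_arch_pow[of 2 "\<rho> / x"] by auto
  then have "\<rho> / 2 ^ n \<le> x" using assms by (simp add: field_simps)
  moreover have "\<not> \<rho> / 2 ^ 0 \<le> x" using assms by simp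
  ultimately obtain k where "\<not> \<rho> / 2 ^ k \<le> x" "\<rho> / 2 ^ Suc k \<le> x"
    using ex_least_nat_less[of "\<lambda>k. \<rho> / 2 ^ k \<le> x"] by blast
  then show ?thesis using that not_less by blast
qed

lemma nn_integral_le_suminf_of_cover:
  fixes g :: "'a \<Rightarrow> ennreal"
  assumes g: "g \<in> borel_measurable M" and A: "\<And>k. A k \<in> sets M"
    and cover: "\<And>u. u \<in> S \<Longrightarrow> g u \<noteq> 0 \<Longrightarrow> \<exists>k. u \<in> A k"
  shows "(\<integral>\<^sup>+u\<in>S. g u \<partial>M) \<le> (\<Sum>k. \<integral>\<^sup>+u\<in>A k. g u \<partial>M)"
proof -
  have "g u * indicator S u \<le> (\<Sum>k. g u * indicator (A k) u)" for u
  proof (cases "u \<in> S \<and> g u \<noteq> 0")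
    case True
    then obtain k where "u \<in> A k" using cover by blast
    then have "g u * indicator S u = g u * indicator (A k) u" using True by simp
    also have "\<dots> \<le> (\<Sum>j<Suc k. g u * indicator (A j) u)" by (rule member_le_sum) auto
    also have "\<dots> \<le> (\<Sum>j. g u * indicator (A j) u)" by (rule sum_le_suminf) auto
    finally show ?thesis .
  qed auto
  then have "(\<integral>\<^sup>+u. g u * indicator S u \<partial>M) \<le> (\<integral>\<^sup>+u. (\<Sum>k. g u * indicator (A k) u) \<partial>M)"
    by (intro nn_integral_mono)
  also have "\<dots> = (\<Sum>k. \<integral>\<^sup>+u. g u * indicator (A k) u \<partial>M)"
    by (rule nn_integral_suminf) (use g A in measurable)
  finally show ?thesis .
qed

lemma suminf_ennreal_geometric:
  fixes a q :: real
  assumes "0 \<le> a" "0 \<le> q" "q < 1"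
  shows "(\<Sum>k. ennreal (a * q ^ k)) = ennreal (a / (1 - q))"
proof -
  have "summable (\<lambda>k. a * q ^ k)" using assms by (intro summable_mult summable_geometric) simp
  then have "(\<Sum>k. ennreal (a * q ^ k)) = ennreal (\<Sum>k. a * q ^ k)"
    using assms by (intro suminf_ennreal2) auto
  also have "(\<Sum>k. a * q ^ k) = a / (1 - q)"
    using assms by (simp add: suminf_mult suminf_geometric)
  finally show ?thesis .
qed

lemma nn_integral_frac_kernel_shell:
  fixes S :: "'a::euclidean_space set"
  assumes s: "0 \<le> s" and T: "0 < T" and S: "S \<in> sets lebesgue"
    and growth: "emeasure lebesgue (S \<inter> ball 0 (2 * T)) \<le> ennreal m"
  shows "(\<integral>\<^sup>+u\<in>S \<inter> (ball 0 (2 * T) - ball 0 T). frac_kernel s u \<partial>lebesgue)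
    \<le> ennreal (T powr - (real DIM('a) + s) * m)"
proof -
  have "(\<integral>\<^sup>+u\<in>S \<inter> (ball 0 (2 * T) - ball 0 T). frac_kernel s u \<partial>lebesgue)
      \<le> (\<integral>\<^sup>+u. ennreal (T powr - (real DIM('a) + s)) * indicator (S \<inter> ball 0 (2 * T)) u \<partial>lebesgue)"
    using T s
    by (intro nn_integral_mono) (auto intro!: ennreal_leI powr_mono2' split: split_indicator)
  also have "\<dots> = ennreal (T powr - (real DIM('a) + s)) * emeasure lebesgue (S \<inter> ball 0 (2 * T))"
    using S by (intro nn_integral_cmult_indicator) auto
  also have "\<dots> \<le> ennreal (T powr - (real DIM('a) + s)) * ennreal m"
    by (intro mult_left_mono growth) auto
  finally show ?thesis by (simp add: ennreal_mult')
qed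

lemma nn_integral_frac_kernel_dyadic:
  fixes S :: "'a::euclidean_space set" and T :: "nat \<Rightarrow> real"
  assumes s: "0 \<le> s" and S: "S \<in> sets lebesgue" and C: "0 \<le> C" and T: "\<And>k. 0 < T k"
    and growth: "\<And>t. 0 < t \<Longrightarrow>
      emeasure lebesgue (S \<inter> ball 0 t) \<le> ennreal (C * t powr (real DIM('a) + \<gamma>))"
    and cover: "\<And>u. u \<in> S \<Longrightarrow> u \<noteq> 0 \<Longrightarrow> \<exists>k. T k \<le> norm u \<and> norm u < 2 * T k"
  shows "(\<integral>\<^sup>+u\<in>S. frac_kernel s u \<partial>lebesgue)
    \<le> (\<Sum>k. ennreal (C * 2 powr (real DIM('a) + \<gamma>) * T k powr (\<gamma> - s)))"
proof -
  let ?A = "\<lambda>k. S \<inter> (ball 0 (2 * T k) - ball 0 (T k))"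
  have "(\<integral>\<^sup>+u\<in>S. frac_kernel s u \<partial>lebesgue) \<le> (\<Sum>k. \<integral>\<^sup>+u\<in>?A k. frac_kernel s u \<partial>lebesgue)"
  proof (rule nn_integral_le_suminf_of_cover)
    show "?A k \<in> sets lebesgue" for k using S by auto
    \<comment> \<open>\<open>frac_kernel s 0 = 0\<close> because \<open>0 powr _ = 0\<close>, so the origin needs no shell.\<close>
    show "\<exists>k. u \<in> ?A k" if "u \<in> S" "ennreal (frac_kernel s u) \<noteq> 0" for u
      using cover[OF that(1)] that by fastforce
  qed (rule measurable_completion, measurable)
  also have "\<dots> \<le> (\<Sum>k. ennreal (C * 2 powr (real DIM('a) + \<gamma>) * T k powr (\<gamma> - s)))"
  proof (intro suminf_le order_trans[OF nn_integral_frac_kernel_shell[OF s T S growth]])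
    fix k
    have "T k powr - (real DIM('a) + s) * (C * (2 * T k) powr (real DIM('a) + \<gamma>))
        = C * 2 powr (real DIM('a) + \<gamma>)
          * (T k powr - (real DIM('a) + s) * T k powr (real DIM('a) + \<gamma>))"
      using T[of k] by (simp add: powr_mult)
    also have "\<dots> = C * 2 powr (real DIM('a) + \<gamma>) * T k powr (\<gamma> - s)"
      by (simp add: powr_add[symmetric])
    finally show "ennreal (T k powr - (real DIM('a) + s) * (C * (2 * T k) powr (real DIM('a) + \<gamma>)))
        \<le> ennreal (C * 2 powr (real DIM('a) + \<gamma>) * T k powr (\<gamma> - s))" by (simp only: order_refl)
  qed (use T in simp_all)
  finally show ?thesis .
qed

lemma powr_power_base: "0 < b \<Longrightarrow> (b ^ k :: real) powr a = (b powr a) ^ k"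
  by (simp add: powr_realpow[symmetric] powr_powr powr_power mult.commute)

lemma nn_integral_frac_kernel_outside_ball_le:
  fixes S :: "'a::euclidean_space set"
  assumes s: "0 \<le> s" "\<gamma> < s" and S: "S \<in> sets lebesgue" and C: "0 \<le> C" and \<rho>: "0 < \<rho>"
    and growth: "\<And>t. 0 < t \<Longrightarrow>
      emeasure lebesgue (S \<inter> ball 0 t) \<le> ennreal (C * t powr (real DIM('a) + \<gamma>))"
  shows "(\<integral>\<^sup>+u\<in>S - ball 0 \<rho>. frac_kernel s u \<partial>lebesgue)
    \<le> ennreal (C * 2 powr (real DIM('a) + \<gamma>) * \<rho> powr (\<gamma> - s) / (1 - 2 powr (\<gamma> - s)))"
proof -
  define q where "q = (2::real) powr (\<gamma> - s)"
  have q: "0 < q" "q < 1" unfolding q_def using s by (auto intro: powr_less_one)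
  have "(\<integral>\<^sup>+u\<in>S - ball 0 \<rho>. frac_kernel s u \<partial>lebesgue)
      \<le> (\<Sum>k. ennreal (C * 2 powr (real DIM('a) + \<gamma>) * (2 ^ k * \<rho>) powr (\<gamma> - s)))"
  proof (rule nn_integral_frac_kernel_dyadic[OF s(1) _ C])
    show "S - ball 0 \<rho> \<in> sets lebesgue" using S by auto
    show "0 < 2 ^ k * \<rho>" for k :: nat using \<rho> by simp
    show "emeasure lebesgue ((S - ball 0 \<rho>) \<inter> ball 0 t) \<le> ennreal (C * t powr (real DIM('a) + \<gamma>))"
      if "0 < t" for t
      by (rule order_trans[OF emeasure_mono growth[OF that]]) (use S in auto)
    show "\<exists>k. 2 ^ k * \<rho> \<le> norm u \<and> norm u < 2 * (2 ^ k * \<rho>)" if "u \<in> S - ball 0 \<rho>" for u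
    proof -
      from that obtain k :: nat where "2 ^ k * \<rho> \<le> norm u" "norm u < 2 ^ Suc k * \<rho>"
        using ex_dyadic_scale_above[OF \<rho>, of "norm u"] by auto
      then show ?thesis by auto
    qed
  qed
  also have "\<dots> = (\<Sum>k. ennreal (C * 2 powr (real DIM('a) + \<gamma>) * \<rho> powr (\<gamma> - s) * q ^ k))"
  proof -
    have "(2 ^ k * \<rho>) powr (\<gamma> - s) = \<rho> powr (\<gamma> - s) * q ^ k" for k :: nat
      using \<rho> by (simp add: powr_mult powr_power_base q_def)
    then show ?thesis by (simp only: mult.assoc)
  qed
  also have "\<dots> = ennreal (C * 2 powr (real DIM('a) + \<gamma>) * \<rho> powr (\<gamma> - s) / (1 - q))"
    using q C by (intro suminf_ennreal_geometric) auto
  finally show ?thesis unfolding q_def .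
qed

lemma nn_integral_frac_kernel_inside_ball_le:
  fixes S :: "'a::euclidean_space set"
  assumes s: "0 \<le> s" "s < \<gamma>" and S: "S \<in> sets lebesgue" and C: "0 \<le> C" and \<rho>: "0 < \<rho>"
    and growth: "\<And>t. 0 < t \<Longrightarrow>
      emeasure lebesgue (S \<inter> ball 0 t) \<le> ennreal (C * t powr (real DIM('a) + \<gamma>))"
  shows "(\<integral>\<^sup>+u\<in>S \<inter> ball 0 \<rho>. frac_kernel s u \<partial>lebesgue)
    \<le> ennreal (C * 2 powr (real DIM('a) + s) * \<rho> powr (\<gamma> - s) / (1 - 2 powr (s - \<gamma>)))"
proof -
  define q where "q = (2::real) powr (s - \<gamma>)"
  have q: "0 < q" "q < 1" unfolding q_def using s by (auto intro: powr_less_one)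
  have "(\<integral>\<^sup>+u\<in>S \<inter> ball 0 \<rho>. frac_kernel s u \<partial>lebesgue)
      \<le> (\<Sum>k. ennreal (C * 2 powr (real DIM('a) + \<gamma>) * (\<rho> / 2 ^ Suc k) powr (\<gamma> - s)))"
  proof (rule nn_integral_frac_kernel_dyadic[OF s(1) _ C])
    show "S \<inter> ball 0 \<rho> \<in> sets lebesgue" using S by auto
    show "0 < \<rho> / 2 ^ Suc k" for k using \<rho> by simp
    show "emeasure lebesgue (S \<inter> ball 0 \<rho> \<inter> ball 0 t) \<le> ennreal (C * t powr (real DIM('a) + \<gamma>))"
      if "0 < t" for t
      by (rule order_trans[OF emeasure_mono growth[OF that]]) (use S in auto)
    show "\<exists>k. \<rho> / 2 ^ Suc k \<le> norm u \<and> norm u < 2 * (\<rho> / 2 ^ Suc k)"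
      if "u \<in> S \<inter> ball 0 \<rho>" "u \<noteq> 0" for u
    proof -
      from that obtain k :: nat where "\<rho> / 2 ^ Suc k \<le> norm u" "norm u < \<rho> / 2 ^ k"
        using ex_dyadic_scale_below[of "norm u" \<rho>] by auto
      then show ?thesis by auto
    qed
  qed
  also have "\<dots> = (\<Sum>k. ennreal (C * 2 powr (real DIM('a) + s) * \<rho> powr (\<gamma> - s) * q ^ k))"
  proof -
    have "(\<rho> / 2 ^ Suc k) powr (\<gamma> - s) = \<rho> powr (\<gamma> - s) * q ^ Suc k" for k
    proof -
      have "(\<rho> / 2 ^ Suc k) powr (\<gamma> - s) = (\<rho> * (1 / 2) ^ Suc k) powr (\<gamma> - s)"
        by (simp add: power_one_over)
      also have "\<dots> = \<rho> powr (\<gamma> - s) * ((1 / 2) ^ Suc k) powr (\<gamma> - s)"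
        using \<rho> by (intro powr_mult; simp)
      also have "((1 / 2) ^ Suc k) powr (\<gamma> - s) = ((1 / 2) powr (\<gamma> - s)) ^ Suc k"
        by (rule powr_power_base) simp
      also have "(1 / 2) powr (\<gamma> - s) = q"
        unfolding q_def by (simp add: powr_divide powr_diff)
      finally show ?thesis .
    qed
    moreover have "2 powr (real DIM('a) + \<gamma>) * q = 2 powr (real DIM('a) + s)"
      unfolding q_def by (simp add: powr_add[symmetric])
    ultimately have "2 powr (real DIM('a) + \<gamma>) * (\<rho> / 2 ^ Suc k) powr (\<gamma> - s)
        = 2 powr (real DIM('a) + s) * \<rho> powr (\<gamma> - s) * q ^ k" for k
      by (simp add: mult_ac)
    then show ?thesis by (simp only: mult.assoc)
  qed
  also have "\<dots> = ennreal (C * 2 powr (real DIM('a) + s) * \<rho> powr (\<gamma> - s) / (1 - q))"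
    using q C by (intro suminf_ennreal_geometric) auto
  finally show ?thesis unfolding q_def .
qed

definition exterior_const :: "nat \<Rightarrow> real \<Rightarrow> real" where
  "exterior_const d s = 2 ^ d * unit_ball_vol d / (1 - 2 powr - s)"

lemma exterior_const_nonneg:
  assumes "0 < s"
  shows "0 \<le> exterior_const d s"
proof -
  have "2 powr - s < (1::real)" using assms by (simp add: powr_less_one)
  then show ?thesis unfolding exterior_const_def by simp
qed

lemma nn_integral_frac_kernel_outside_ball:
  assumes "0 < s" "0 < \<rho>"
  shows "(\<integral>\<^sup>+u\<in>- ball (0::'a::euclidean_space) \<rho>. frac_kernel s u \<partial>lebesgue)
    \<le> ennreal (exterior_const DIM('a) s * \<rho> powr - s)"
proof -
  have "emeasure lebesgue (UNIV \<inter> ball (0::'a) t)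
      \<le> ennreal (unit_ball_vol DIM('a) * t powr (real DIM('a) + 0))"
    if "0 < t" for t
    using that emeasure_lebesgue_ball[of t "0::'a"] by (simp add: powr_realpow)
  then have "(\<integral>\<^sup>+u\<in>UNIV - ball (0::'a) \<rho>. frac_kernel s u \<partial>lebesgue)
      \<le> ennreal (unit_ball_vol DIM('a) * 2 powr (real DIM('a) + 0) * \<rho> powr (0 - s)
          / (1 - 2 powr (0 - s)))"
    using assms by (intro nn_integral_frac_kernel_outside_ball_le) auto
  then show ?thesis by (simp add: exterior_const_def powr_realpow Compl_eq_Diff_UNIV mult_ac)
qed

section \<open>The lens between two tangent balls\<close>

lemma measure_slab_packing:
  fixes n :: "'a::euclidean_space"
  assumes n: "norm n = 1" and a: "0 < a" and t: "0 < t"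
  shows "real N * measure lebesgue {u. \<bar>u \<bullet> n\<bar> \<le> a \<and> norm u < t}
    \<le> unit_ball_vol DIM('a) * (t + 3 * a * real N) ^ DIM('a)"
proof -
  define S where "S = {u::'a. \<bar>u \<bullet> n\<bar> \<le> a \<and> norm u < t}"
  \<comment> \<open>\<open>N\<close> disjoint translates of the slab, all inside a ball of radius \<open>t + 3 a N\<close>.\<close>
  define T where "T j = (\<lambda>u. 1 *\<^sub>R u + (3 * a * real j) *\<^sub>R n) ` S" for j :: nat
  have "S \<in> sets borel" unfolding S_def by measurable
  then have S: "S \<in> sets lebesgue" by simp
  have "emeasure lebesgue S \<le> emeasure lebesgue (ball (0::'a) t)"
    by (rule emeasure_mono) (auto simp: S_def)
  also have "\<dots> < \<infinity>" using t emeasure_lebesgue_ball[of t "0::'a"] by simp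
  finally have S_fin: "emeasure lebesgue S < \<infinity>" .
  have T_emeasure: "emeasure lebesgue (T j) = emeasure lebesgue S" for j
    unfolding T_def using emeasure_lebesgue_affine[of 1 "(3 * a * real j) *\<^sub>R n" S] by simp
  have T_sets: "T j \<in> sets lebesgue" for j
    unfolding T_def using S lebesgue_sets_translation[of S "(3 * a * real j) *\<^sub>R n"]
    by (simp add: add.commute)
  have disjoint: "disjoint_family_on T {..<N}"
  proof (unfold disjoint_family_on_def, intro ballI impI)
    fix i j assume ij: "i \<in> {..<N}" "j \<in> {..<N}" "i \<noteq> j"
    show "T i \<inter> T j = {}"
    proof (rule ccontr)
      assume "T i \<inter> T j \<noteq> {}"
      then obtain u v where uv: "u \<in> S" "v \<in> S"
        "u + (3 * a * real i) *\<^sub>R n = v + (3 * a * real j) *\<^sub>R n"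
        unfolding T_def by auto
      then have "u \<bullet> n + 3 * a * real i = v \<bullet> n + 3 * a * real j"
        using n by (metis inner_add_left inner_scaleR_left norm_eq_1 mult.right_neutral)
      then have "v \<bullet> n - u \<bullet> n = 3 * a * (real i - real j)" by (simp add: algebra_simps)
      then have "3 * a * \<bar>real i - real j\<bar> = \<bar>v \<bullet> n - u \<bullet> n\<bar>"
        using a by (simp add: abs_mult)
      also have "\<dots> \<le> 2 * a"
        using abs_triangle_ineq4[of "v \<bullet> n" "u \<bullet> n"] uv(1,2) unfolding S_def by auto
      finally have "3 * a * \<bar>real i - real j\<bar> \<le> 2 * a" .
      moreover have "1 \<le> \<bar>real i - real j\<bar>" using ij(3) by linarith
      ultimately have "3 * a \<le> 2 * a"
        using mult_left_mono[of 1 "\<bar>real i - real j\<bar>" "3 * a"] a by linarith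
      then show False using a by linarith
    qed
  qed
  have union: "(\<Union>j<N. T j) \<subseteq> ball 0 (t + 3 * a * real N)"
  proof
    fix v assume "v \<in> (\<Union>j<N. T j)"
    then obtain j u where j: "j < N" and u: "u \<in> S" and v: "v = u + (3 * a * real j) *\<^sub>R n"
      unfolding T_def by auto
    have "norm v \<le> norm u + 3 * a * real j"
      unfolding v using norm_triangle_ineq[of u "(3 * a * real j) *\<^sub>R n"] n a by simp
    also have "\<dots> < t + 3 * a * real N"
      using u j a unfolding S_def by (auto intro: add_less_le_mono)
    finally show "v \<in> ball 0 (t + 3 * a * real N)" by simp
  qed
  have "of_nat N * emeasure lebesgue S = (\<Sum>j<N. emeasure lebesgue (T j))"
    by (simp add: T_emeasure)
  also have "\<dots> = emeasure lebesgue (\<Union>j<N. T j)"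
    by (rule sum_emeasure) (use T_sets disjoint in auto)
  also have "\<dots> \<le> emeasure lebesgue (ball (0::'a) (t + 3 * a * real N))"
    using union by (intro emeasure_mono) auto
  also have "\<dots> = ennreal (unit_ball_vol DIM('a) * (t + 3 * a * real N) ^ DIM('a))"
    using a t by (intro emeasure_lebesgue_ball) auto
  finally show ?thesis
    using S_fin a t unfolding S_def[symmetric]
    by (simp add: emeasure_eq_ennreal_measure ennreal_of_nat_eq_real_of_nat
        ennreal_mult''[symmetric] ennreal_le_iff)
qed

lemma measure_slab_le:
  fixes n :: "'a::euclidean_space"
  assumes n: "norm n = 1" and a: "0 < a" and t: "0 < t"
  shows "measure lebesgue {u. \<bar>u \<bullet> n\<bar> \<le> a \<and> norm u < t}
    \<le> 6 * 2 ^ DIM('a) * unit_ball_vol DIM('a) * t ^ DIM('a) * (a / t)"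
proof -
  define S where "S = {u::'a. \<bar>u \<bullet> n\<bar> \<le> a \<and> norm u < t}"
  define \<omega> where "\<omega> = unit_ball_vol DIM('a)"
  have \<omega>: "0 < \<omega>" unfolding \<omega>_def by simp
  have "S \<in> sets borel" unfolding S_def by measurable
  then have "measure lebesgue S \<le> measure lebesgue (ball (0::'a) t)"
    by (intro measure_mono_fmeasurable) (auto simp: S_def)
  also have "\<dots> = \<omega> * t ^ DIM('a)" unfolding \<omega>_def using t by (intro measure_lebesgue_ball) simp
  finally have S_ball: "measure lebesgue S \<le> \<omega> * t ^ DIM('a)" .
  show ?thesis
  proof (cases "3 * a \<le> t")
    case True
    define N where "N = nat \<lfloor>t / (3 * a)\<rfloor>"
    have "1 \<le> t / (3 * a)" using True a by simp
    then have N: "1 \<le> real N" "real N \<le> t / (3 * a)" "t / (3 * a) < real N + 1"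
      unfolding N_def by (auto simp: le_floor_iff)
    have "real N * measure lebesgue S \<le> \<omega> * (t + 3 * a * real N) ^ DIM('a)"
      unfolding S_def \<omega>_def by (rule measure_slab_packing[OF n a t])
    also have "\<dots> \<le> \<omega> * (2 * t) ^ DIM('a)"
      using N a t \<omega> by (intro mult_left_mono power_mono) (auto simp: field_simps)
    finally have "measure lebesgue S \<le> \<omega> * (2 * t) ^ DIM('a) / real N"
      using N by (simp add: field_simps)
    also have "\<dots> \<le> \<omega> * (2 * t) ^ DIM('a) * (6 * a / t)"
    proof -
      have "t < 3 * a * real N + 3 * a" using N(3) a by (simp add: field_simps)
      moreover have "3 * a \<le> 3 * a * real N" using N(1) a by simp
      ultimately have "t < 6 * a * real N" by linarith
      then have "1 / real N \<le> 6 * a / t" using N t by (simp add: field_simps)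
      then show ?thesis using \<omega> t by (simp add: divide_inverse mult_left_mono)
    qed
    finally show ?thesis unfolding S_def \<omega>_def by (simp add: power_mult_distrib mult_ac)
  next
    case False
    then have "t \<le> 6 * a" using a by simp
    also have "\<dots> \<le> 6 * 2 ^ DIM('a) * a" using a by simp
    finally have "1 \<le> 6 * 2 ^ DIM('a) * (a / t)" using t by (simp add: field_simps)
    then have "\<omega> * t ^ DIM('a) * 1 \<le> \<omega> * t ^ DIM('a) * (6 * 2 ^ DIM('a) * (a / t))"
      using \<omega> t by (intro mult_left_mono) auto
    with S_ball show ?thesis unfolding S_def \<omega>_def by (simp add: mult_ac)
  qed
qed

lemma abs_inner_le_of_notin_balls:
  fixes c u :: "'a::real_inner"
  assumes "u \<notin> ball c (norm c)" "u \<notin> ball (- c) (norm c)"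
  shows "\<bar>u \<bullet> c\<bar> \<le> norm u ^ 2 / 2"
proof -
  have "norm c ^ 2 \<le> norm (u - c) ^ 2" "norm c ^ 2 \<le> norm (u + c) ^ 2"
    using assms by (auto simp: dist_norm norm_minus_commute intro!: power_mono)
  moreover have "norm (u - c) ^ 2 = norm u ^ 2 - 2 * (u \<bullet> c) + norm c ^ 2"
    "norm (u + c) ^ 2 = norm u ^ 2 + 2 * (u \<bullet> c) + norm c ^ 2"
    by (simp_all add: power2_norm_eq_inner inner_diff_left inner_diff_right inner_add_left
        inner_add_right inner_commute)
  ultimately show ?thesis by auto
qed

lemma emeasure_lens_ball_le:
  fixes c :: "'a::euclidean_space"
  assumes r: "0 < r" and c: "norm c = r" and t: "0 < t"
  shows "emeasure lebesgue (- (ball c r \<union> ball (- c) r) \<inter> ball 0 t)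
    \<le> ennreal (3 * 2 ^ DIM('a) * unit_ball_vol DIM('a) / r * t powr (real DIM('a) + 1))"
proof -
  define a where "a = t ^ 2 / (2 * r)"
  have n: "norm (c /\<^sub>R r) = 1" using c r by simp
  have a: "0 < a" unfolding a_def using r t by simp
  define slab where "slab = {u. \<bar>u \<bullet> (c /\<^sub>R r)\<bar> \<le> a \<and> norm u < t}"
  have lens_sub: "- (ball c r \<union> ball (- c) r) \<inter> ball 0 t \<subseteq> slab"
  proof (unfold slab_def, safe)
    fix u assume u: "u \<notin> ball c r" "u \<notin> ball (- c) r" "u \<in> ball 0 t"
    have "\<bar>u \<bullet> c\<bar> \<le> norm u ^ 2 / 2" using abs_inner_le_of_notin_balls[of u c] u c by simp
    also have "\<dots> \<le> t ^ 2 / 2" using u(3) by (simp add: power_strict_mono less_imp_le)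
    finally show "\<bar>u \<bullet> (c /\<^sub>R r)\<bar> \<le> a" unfolding a_def using r by (simp add: field_simps)
    show "norm u < t" using u(3) by simp
  qed
  have slab: "slab \<in> fmeasurable lebesgue"
  proof (rule fmeasurableI2[OF lmeasurable_ball[of 0 t]])
    have "slab \<in> sets borel" unfolding slab_def by measurable
    then show "slab \<in> sets lebesgue" by simp
  qed (auto simp: slab_def)
  have "emeasure lebesgue (- (ball c r \<union> ball (- c) r) \<inter> ball 0 t) \<le> emeasure lebesgue slab"
    using lens_sub slab by (intro emeasure_mono) (auto simp: fmeasurable_def)
  also have "\<dots> = ennreal (measure lebesgue slab)"
    using slab by (rule emeasure_eq_measure2)
  also have "\<dots> \<le> ennreal (6 * 2 ^ DIM('a) * unit_ball_vol DIM('a) * t ^ DIM('a) * (a / t))"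
    unfolding slab_def by (intro ennreal_leI measure_slab_le n a t)
  also have "6 * 2 ^ DIM('a) * unit_ball_vol DIM('a) * t ^ DIM('a) * (a / t)
      = 3 * 2 ^ DIM('a) * unit_ball_vol DIM('a) / r * t powr (real DIM('a) + 1)"
    using r t by (simp add: a_def powr_add powr_realpow power2_eq_square field_simps)
  finally show ?thesis .
qed

definition lens_const :: "nat \<Rightarrow> real \<Rightarrow> real" where
  "lens_const d s = 3 * 2 ^ d * unit_ball_vol d * 2 powr (d + s) / (1 - 2 powr (s - 1))"

lemma lens_const_nonneg:
  assumes "s < 1"
  shows "0 \<le> lens_const d s"
proof -
  have "2 powr (s - 1) < (1::real)" using assms by (simp add: powr_less_one)
  then show ?thesis unfolding lens_const_def by simp
qed

lemma nn_integral_frac_kernel_lens: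
  fixes c :: "'a::euclidean_space"
  assumes s: "0 \<le> s" "s < 1" and r: "0 < r" and c: "norm c = r" and \<rho>: "0 < \<rho>"
  shows "(\<integral>\<^sup>+u\<in>- (ball c r \<union> ball (- c) r) \<inter> ball 0 \<rho>. frac_kernel s u \<partial>lebesgue)
    \<le> ennreal (lens_const DIM('a) s * \<rho> powr (1 - s) / r)"
proof -
  have "(\<integral>\<^sup>+u\<in>- (ball c r \<union> ball (- c) r) \<inter> ball 0 \<rho>. frac_kernel s u \<partial>lebesgue)
    \<le> ennreal (3 * 2 ^ DIM('a) * unit_ball_vol DIM('a) / r * 2 powr (real DIM('a) + s)
        * \<rho> powr (1 - s) / (1 - 2 powr (s - 1)))"
    using s r \<rho> emeasure_lens_ball_le[OF r c]
    by (intro nn_integral_frac_kernel_inside_ball_le) auto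
  also have "\<dots> = ennreal (lens_const DIM('a) s * \<rho> powr (1 - s) / r)"
    by (simp add: lens_const_def mult.commute)
  finally show ?thesis .
qed

lemma integrable_frac_kernel_outside_ball:
  assumes "0 < s" "0 < e"
  shows "integrable lebesgue (\<lambda>u. indicator (- ball (0::'a::euclidean_space) e) u * frac_kernel s u)"
proof (rule integrableI_nonneg)
  show "(\<lambda>u. indicator (- ball (0::'a) e) u * frac_kernel s u) \<in> borel_measurable lebesgue"
    by (rule measurable_completion) measurable
  have "(\<integral>\<^sup>+u. ennreal (indicator (- ball (0::'a) e) u * frac_kernel s u) \<partial>lebesgue)
      = (\<integral>\<^sup>+u\<in>- ball (0::'a) e. frac_kernel s u \<partial>lebesgue)"
    by (auto intro!: nn_integral_cong split: split_indicator)
  also have "\<dots> < \<infinity>"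
    using nn_integral_frac_kernel_outside_ball[OF assms, where 'a='a]
    by (simp add: order_le_less_trans)
  finally show "(\<integral>\<^sup>+u. ennreal (indicator (- ball (0::'a) e) u * frac_kernel s u) \<partial>lebesgue) < \<infinity>" .
qed simp

lemma integrable_dominated_by_frac_kernel:
  fixes g :: "'a::euclidean_space \<Rightarrow> real"
  assumes s: "0 < s" and e: "0 < e" and S: "S \<in> sets lebesgue" "S \<inter> ball 0 e = {}"
    and g: "g \<in> borel_measurable lebesgue" and bound: "\<And>u. u \<in> S \<Longrightarrow> \<bar>g u\<bar> \<le> C * frac_kernel s u"
  shows "integrable lebesgue (\<lambda>u. indicator S u * g u)"
proof (rule Bochner_Integration.integrable_bound)
  show "integrable lebesgue (\<lambda>u. C * (indicator (- ball (0::'a) e) u * frac_kernel s u))"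
    using integrable_frac_kernel_outside_ball[OF s e, where 'a='a] by simp
  show "(\<lambda>u. indicator S u * g u) \<in> borel_measurable lebesgue" using S g by measurable
  show "AE u in lebesgue. norm (indicator S u * g u)
      \<le> norm (C * (indicator (- ball (0::'a) e) u * frac_kernel s u))"
  proof (rule AE_I2)
    fix u
    show "norm (indicator S u * g u)
        \<le> norm (C * (indicator (- ball (0::'a) e) u * frac_kernel s u))"
    proof (cases "u \<in> S")
      case True
      then have "u \<notin> ball 0 e" using S(2) by blast
      then show ?thesis using bound[OF True] True by simp
    qed simp
  qed
qed

lemma integral_le_of_nn_integral_le:
  fixes f :: "'a \<Rightarrow> real"
  assumes "integrable M f" "\<And>x. 0 \<le> f x" "(\<integral>\<^sup>+x. f x \<partial>M) \<le> ennreal B" "0 \<le> B"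
  shows "integral\<^sup>L M f \<le> B"
  using assms by (simp add: nn_integral_eq_integral ennreal_le_iff)

lemma
  fixes x :: "'a::euclidean_space"
  shows lebesgue_distr_reflect: "distr lebesgue lebesgue (\<lambda>u. x - u) = lebesgue"
    and measurable_reflect: "(\<lambda>u. x - u) \<in> lebesgue \<rightarrow>\<^sub>M lebesgue"
proof -
  have T: "(\<lambda>u::'a. x + (\<Sum>j\<in>Basis. (- 1 * (u \<bullet> j)) *\<^sub>R j)) = (\<lambda>u. x - u)"
    by (simp add: sum_negf euclidean_representation)
  show "(\<lambda>u. x - u) \<in> lebesgue \<rightarrow>\<^sub>M lebesgue"
    using lebesgue_affine_measurable[of "\<lambda>_::'a. -1" x] unfolding T by simp
  have "lebesgue = density (distr lebesgue lebesgue (\<lambda>u::'a. x + (\<Sum>j\<in>Basis. (- 1 * (u \<bullet> j)) *\<^sub>R j)))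
      (\<lambda>_. (\<Prod>j\<in>(Basis::'a set). \<bar>- 1::real\<bar>))"
    by (rule lebesgue_affine_euclidean) simp
  then show "distr lebesgue lebesgue (\<lambda>u. x - u) = lebesgue"
    unfolding T by (simp add: density_1)
qed

lemma integral_reflect_lebesgue:
  fixes f :: "'a::euclidean_space \<Rightarrow> real"
  assumes "f \<in> borel_measurable lebesgue"
  shows "(\<integral>u. f (x - u) \<partial>lebesgue) = (\<integral>u. f u \<partial>lebesgue)"
  using integral_distr[OF measurable_reflect assms, of x] by (simp add: lebesgue_distr_reflect)

lemma emeasure_reflect_lebesgue:
  fixes x :: "'a::euclidean_space"
  assumes "A \<in> sets lebesgue"
  shows "emeasure lebesgue ((\<lambda>u. x - u) -` A) = emeasure lebesgue A"
  using emeasure_distr[OF measurable_reflect assms, of x] by (simp add: lebesgue_distr_reflect)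

lemma borel_measurable_chi_tilde [measurable]:
  assumes [measurable]: "E \<in> sets lebesgue"
  shows "chi_tilde E \<in> borel_measurable lebesgue"
  unfolding chi_tilde_def[abs_def] by measurable

lemma antitone_tendsto_SUP_at_right:
  fixes f :: "real \<Rightarrow> real"
  assumes r: "0 < r" and antitone: "\<And>a b. 0 < a \<Longrightarrow> a \<le> b \<Longrightarrow> b < r \<Longrightarrow> f b \<le> f a"
  shows "((\<lambda>e. ereal (f e)) \<longlongrightarrow> (SUP e\<in>{0<..<r}. ereal (f e))) (at_right 0)"
proof (rule increasing_tendsto)
  show "\<forall>\<^sub>F e in at_right 0. ereal (f e) \<le> (SUP e\<in>{0<..<r}. ereal (f e))"
    unfolding eventually_at_right_field using r by (intro exI[of _ r]) (auto intro: SUP_upper)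
  fix y assume "y < (SUP e\<in>{0<..<r}. ereal (f e))"
  then obtain e where e: "e \<in> {0<..<r}" "y < ereal (f e)" by (auto simp: less_SUP_iff)
  show "\<forall>\<^sub>F e' in at_right 0. y < ereal (f e')"
    unfolding eventually_at_right_field
  proof (intro exI[of _ e] conjI allI impI)
    show "0 < e" using e(1) by simp
    fix e' :: real assume "0 < e'" "e' < e"
    then have "ereal (f e) \<le> ereal (f e')" using e(1) by (simp add: antitone)
    with e(2) show "y < ereal (f e')" by (rule less_le_trans)
  qed
qed

lemma antitone_bounded_convergent_at_right:
  fixes f :: "real \<Rightarrow> real"
  assumes r: "0 < r" and antitone: "\<And>a b. 0 < a \<Longrightarrow> a \<le> b \<Longrightarrow> b < r \<Longrightarrow> f b \<le> f a"
    and bounded: "\<And>e. 0 < e \<Longrightarrow> e < r \<Longrightarrow> f e \<le> B"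
  obtains l where "(f \<longlongrightarrow> l) (at_right 0)"
proof -
  let ?L = "SUP e\<in>{0<..<r}. ereal (f e)"
  have "?L \<le> ereal B" using bounded by (auto intro!: SUP_least)
  moreover have "ereal (f (r / 2)) \<le> ?L" using r by (intro SUP_upper) auto
  ultimately obtain l where "?L = ereal l" by (cases ?L) auto
  then have "((\<lambda>e. ereal (f e)) \<longlongrightarrow> ereal l) (at_right 0)"
    using antitone_tendsto_SUP_at_right[of r f, OF r antitone] by simp
  then show ?thesis using that by (simp add: lim_ereal)
qed

locale stable_kernel =
  fixes K :: "'a::euclidean_space \<Rightarrow> real" and s lam Lam :: real
  assumes K_measurable: "K \<in> borel_measurable lebesgue"
    and K_lower: "\<And>y. y \<noteq> 0 \<Longrightarrow> lam * frac_kernel s y \<le> K y"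
    and K_upper: "\<And>y. y \<noteq> 0 \<Longrightarrow> K y \<le> Lam * frac_kernel s y"
    and K_even: "\<And>y. K (- y) = K y"
    and s_bounds: "0 < s" "s < 1"
    and lam_bounds: "0 < lam" "lam \<le> Lam"
begin

lemma K_nonneg: "y \<noteq> 0 \<Longrightarrow> 0 \<le> K y"
  using K_lower[of y] lam_bounds
  by (meson less_le_not_le mult_nonneg_nonneg order_trans powr_ge_zero)

lemma integrable_bounded_mult_K:
  assumes e: "0 < e" and S: "S \<in> sets lebesgue" "S \<inter> ball 0 e = {}"
    and h: "h \<in> borel_measurable lebesgue" "\<And>u. \<bar>h u\<bar> \<le> B"
  shows "integrable lebesgue (\<lambda>u. indicator S u * (h u * K u))"
proof (rule integrable_dominated_by_frac_kernel[OF s_bounds(1) e S])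
  show "(\<lambda>u. h u * K u) \<in> borel_measurable lebesgue" using h(1) K_measurable by measurable
  fix u assume "u \<in> S"
  then have u: "u \<noteq> 0" using S(2) e by auto
  have "\<bar>h u * K u\<bar> \<le> B * K u"
    using h(2)[of u] K_nonneg[OF u] by (simp add: abs_mult mult_right_mono)
  also have "\<dots> \<le> B * (Lam * frac_kernel s u)"
    using K_upper[OF u] h(2)[of u] by (intro mult_left_mono) auto
  finally show "\<bar>h u * K u\<bar> \<le> (B * Lam) * frac_kernel s u" by (simp add: mult_ac)
qed

lemma integrable_K:
  assumes "0 < e" "S \<in> sets lebesgue" "S \<inter> ball 0 e = {}"
  shows "integrable lebesgue (\<lambda>u. indicator S u * K u)"
  using integrable_bounded_mult_K[OF assms, of "\<lambda>_. 1" 1] by simp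

lemma integral_K_le:
  assumes e: "0 < e" and S: "S \<in> sets lebesgue" "S \<inter> ball 0 e = {}"
    and B: "0 \<le> B" "(\<integral>\<^sup>+u\<in>S. frac_kernel s u \<partial>lebesgue) \<le> ennreal B"
  shows "(\<integral>u. indicator S u * K u \<partial>lebesgue) \<le> Lam * B"
proof -
  have int_kernel: "integrable lebesgue (\<lambda>u. indicator S u * frac_kernel s u)"
    by (rule integrable_dominated_by_frac_kernel[OF s_bounds(1) e S, of _ 1])
      (auto intro: measurable_completion)
  have "(\<integral>u. indicator S u * K u \<partial>lebesgue)
      \<le> (\<integral>u. Lam * (indicator S u * frac_kernel s u) \<partial>lebesgue)"
  proof (rule integral_mono)
    show "integrable lebesgue (\<lambda>u. indicator S u * K u)" using integrable_K[OF e S] .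
    show "integrable lebesgue (\<lambda>u. Lam * (indicator S u * frac_kernel s u))"
      using int_kernel by simp
    show "indicator S u * K u \<le> Lam * (indicator S u * frac_kernel s u)" for u
    proof (cases "u \<in> S")
      case True
      then have "u \<noteq> 0" using S(2) e by auto
      then show ?thesis using K_upper[of u] True by simp
    qed simp
  qed
  also have "\<dots> = Lam * (\<integral>u. indicator S u * frac_kernel s u \<partial>lebesgue)" by simp
  also have "(\<integral>u. indicator S u * frac_kernel s u \<partial>lebesgue) \<le> B"
  proof (rule integral_le_of_nn_integral_le[OF int_kernel _ _ B(1)])
    show "(\<integral>\<^sup>+u. ennreal (indicator S u * frac_kernel s u) \<partial>lebesgue) \<le> ennreal B"
      using B(2) by (simp add: indicator_mult_ennreal mult.commute)
  qed simp
  then have "Lam * (\<integral>u. indicator S u * frac_kernel s u \<partial>lebesgue) \<le> Lam * B"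
    using lam_bounds by (intro mult_left_mono) auto
  finally show ?thesis .
qed

lemma integral_K_outside_ball_ge:
  assumes \<rho>: "0 < \<rho>"
  shows "lam * 2 powr - (real DIM('a) + s) * unit_ball_vol DIM('a) * \<rho> powr - s
    \<le> (\<integral>u. indicator (- ball (0::'a) \<rho>) u * K u \<partial>lebesgue)"
proof -
  let ?A = "ball (0::'a) (2 * \<rho>) - ball 0 \<rho>"
  let ?C = "lam * (2 * \<rho>) powr - (real DIM('a) + s)"
  have A_sets: "?A \<in> sets lebesgue" by simp
  have A_fin: "emeasure lebesgue ?A < \<infinity>"
    using emeasure_mono[of ?A "ball 0 (2 * \<rho>)" lebesgue]
      emeasure_lebesgue_ball[of "2 * \<rho>" "0::'a"] \<rho>
    by (simp add: top.not_eq_extremum order_le_less_trans)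
  have "\<rho> ^ DIM('a) \<le> (2 * \<rho>) ^ DIM('a) - \<rho> ^ DIM('a)"
  proof -
    have "(2::real) \<le> 2 ^ DIM('a)"
      using power_increasing[of 1 "DIM('a)" "2::real"] by (simp add: DIM_positive Suc_leI)
    then have "2 * \<rho> ^ DIM('a) \<le> 2 ^ DIM('a) * \<rho> ^ DIM('a)" using \<rho> by (intro mult_right_mono) auto
    then show ?thesis by (simp add: power_mult_distrib)
  qed
  then have "unit_ball_vol DIM('a) * \<rho> ^ DIM('a)
      \<le> unit_ball_vol DIM('a) * (2 * \<rho>) ^ DIM('a) - unit_ball_vol DIM('a) * \<rho> ^ DIM('a)"
    by (simp add: right_diff_distrib[symmetric])
  also have "\<dots> = measure lebesgue (ball (0::'a) (2 * \<rho>)) - measure lebesgue (ball (0::'a) \<rho>)"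
    using \<rho> by (simp add: content_ball)
  also have "\<dots> = measure lebesgue ?A"
    using \<rho> emeasure_lebesgue_ball[of "2 * \<rho>" "0::'a"] by (intro measure_Diff[symmetric]) auto
  finally have A_measure: "unit_ball_vol DIM('a) * \<rho> ^ DIM('a) \<le> measure lebesgue ?A" .
  have "lam * 2 powr - (real DIM('a) + s) * unit_ball_vol DIM('a) * \<rho> powr - s
      = ?C * (unit_ball_vol DIM('a) * \<rho> ^ DIM('a))"
    using \<rho> by (simp add: powr_mult powr_realpow[symmetric] powr_add[symmetric] mult_ac)
  also have "\<dots> \<le> ?C * measure lebesgue ?A"
    using A_measure lam_bounds by (intro mult_left_mono) auto
  also have "\<dots> = (\<integral>u. indicator ?A u * ?C \<partial>lebesgue)" by simp
  also have "\<dots> \<le> (\<integral>u. indicator ?A u * K u \<partial>lebesgue)"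
  proof (rule integral_mono)
    show "integrable lebesgue (\<lambda>u. indicator ?A u * ?C)"
      using integrable_real_indicator[OF A_sets A_fin] by simp
    show "integrable lebesgue (\<lambda>u. indicator ?A u * K u)" by (rule integrable_K[OF \<rho>]) auto
    show "indicator ?A u * ?C \<le> indicator ?A u * K u" for u
    proof (cases "u \<in> ?A")
      case True
      then have u: "u \<noteq> 0" "\<rho> \<le> norm u" "norm u < 2 * \<rho>" by auto
      have "?C \<le> lam * frac_kernel s u"
        using u s_bounds lam_bounds by (intro mult_left_mono powr_mono2') auto
      also have "\<dots> \<le> K u" by (rule K_lower[OF u(1)])
      finally show ?thesis using True by simp
    qed simp
  qed
  also have "\<dots> \<le> (\<integral>u. indicator (- ball (0::'a) \<rho>) u * K u \<partial>lebesgue)"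
  proof (rule integral_mono)
    show "integrable lebesgue (\<lambda>u. indicator ?A u * K u)" by (rule integrable_K[OF \<rho>]) auto
    show "integrable lebesgue (\<lambda>u. indicator (- ball (0::'a) \<rho>) u * K u)"
      by (rule integrable_K[OF \<rho>]) auto
    show "indicator ?A u * K u \<le> indicator (- ball (0::'a) \<rho>) u * K u" for u
      using K_nonneg[of u] \<rho> by (cases "u \<in> ?A"; cases "u = 0") auto
  qed
  finally show ?thesis .
qed

lemma integral_annulus_antitone:
  assumes h: "h \<in> borel_measurable lebesgue" "\<And>u. 0 \<le> h u" "\<And>u. h u \<le> B" and ab: "0 < a" "a \<le> b"
  shows "(\<integral>u. indicator (ball 0 R - ball (0::'a) b) u * (h u * K u) \<partial>lebesgue)
    \<le> (\<integral>u. indicator (ball 0 R - ball (0::'a) a) u * (h u * K u) \<partial>lebesgue)"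
proof (rule integral_mono)
  have "\<bar>h u\<bar> \<le> B" for u using h(2,3)[of u] by simp
  then show "integrable lebesgue (\<lambda>u. indicator (ball 0 R - ball (0::'a) b) u * (h u * K u))"
    "integrable lebesgue (\<lambda>u. indicator (ball 0 R - ball (0::'a) a) u * (h u * K u))"
    using ab by (auto intro!: integrable_bounded_mult_K[OF _ _ _ h(1)])
  show "indicator (ball 0 R - ball (0::'a) b) u * (h u * K u)
      \<le> indicator (ball 0 R - ball (0::'a) a) u * (h u * K u)" for u
    using ab K_nonneg[of u] h(2)[of u] by (cases "u = 0") (auto split: split_indicator)
qed

end

section \<open>Symmetrization at the touching point\<close>

text \<open>In \<open>H_lower_bound\<close>, \<open>m\<close> stands for \<open>|E \<inter> B(x0, 2r)|\<close> and \<open>\<rho>\<close> for the splitting radius.\<close>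

definition H_lower_bound :: "nat \<Rightarrow> real \<Rightarrow> real \<Rightarrow> real \<Rightarrow> real \<Rightarrow> real \<Rightarrow> real \<Rightarrow> real" where
  "H_lower_bound d s lam Lam r m \<rho> =
     lam * 2 powr - (real d + s) * unit_ball_vol d * \<rho> powr - s
     - Lam * (lens_const d s * \<rho> powr (1 - s) / r)
     - 2 * Lam * (\<rho> powr - (real d + s) * m + exterior_const d s * r powr - s)"

text \<open>\<open>G\<close> and \<open>c\<close> stand for \<open>x - E\<close> and \<open>x - x0\<close> (see \<open>H_KE_ge\<close>).\<close>

locale exterior_ball_kernel = stable_kernel K s lam Lam
  for K :: "'a::euclidean_space \<Rightarrow> real" and s lam Lam +
  fixes G :: "'a set" and c :: 'a and r :: real
  assumes G_sets: "G \<in> sets lebesgue" and r_pos: "0 < r" and norm_c: "norm c = r"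
    and G_outside_ball: "G \<inter> ball c r = {}"
begin

definition lens :: "'a set" where
  "lens = - (ball c r \<union> ball (- c) r)"

lemma lens_sets [simp, measurable]: "lens \<in> sets lebesgue"
  unfolding lens_def by simp

definition signed_integral :: "'a set \<Rightarrow> real" where
  "signed_integral S = (\<integral>u. indicator S u * (chi_tilde G u * K u) \<partial>lebesgue)"

lemma borel_measurable_chi_tilde_reflect: "(\<lambda>u. chi_tilde G (- u)) \<in> borel_measurable lebesgue"
  using measurable_compose[OF measurable_reflect[of 0] borel_measurable_chi_tilde[OF G_sets]]
  by simp

lemma chi_tilde_reflect_sum_ge: "- 2 * indicator lens u \<le> chi_tilde G u + chi_tilde G (- u)"
proof (cases "u \<in> G \<and> - u \<in> G")
  case True
  then have "u \<notin> ball c r" "- u \<notin> ball c r" using G_outside_ball by auto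
  moreover have "norm (- c - u) = norm (c + u)" using norm_minus_cancel[of "c + u"] by simp
  ultimately have "u \<in> lens" unfolding lens_def by (simp add: dist_norm)
  then show ?thesis using True by (simp add: chi_tilde_def)
next
  case False
  then have "0 \<le> chi_tilde G u + chi_tilde G (- u)" by (auto simp: chi_tilde_def)
  then show ?thesis by (simp add: indicator_def)
qed

lemma integrable_chi_tilde_K:
  assumes "0 < e" "S \<in> sets lebesgue" "S \<inter> ball 0 e = {}"
  shows "integrable lebesgue (\<lambda>u. indicator S u * (chi_tilde G u * K u))"
  by (rule integrable_bounded_mult_K[OF assms, of _ 1]) (use G_sets in \<open>auto simp: chi_tilde_def\<close>)

lemma signed_integral_Un:
  assumes e: "0 < e" and S: "S \<in> sets lebesgue" "S \<inter> ball 0 e = {}"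
    and T: "T \<in> sets lebesgue" "T \<inter> ball 0 e = {}" and disjoint: "S \<inter> T = {}"
  shows "signed_integral (S \<union> T) = signed_integral S + signed_integral T"
proof -
  have "signed_integral (S \<union> T)
      = (\<integral>u. indicator S u * (chi_tilde G u * K u)
          + indicator T u * (chi_tilde G u * K u) \<partial>lebesgue)"
    unfolding signed_integral_def using disjoint
    by (intro Bochner_Integration.integral_cong) (auto split: split_indicator)
  also have "\<dots> = signed_integral S + signed_integral T"
    unfolding signed_integral_def
    by (intro Bochner_Integration.integral_add integrable_chi_tilde_K[OF e S]
        integrable_chi_tilde_K[OF e T])
  finally show ?thesis .
qed

lemma signed_integral_symmetric:
  assumes e: "0 < e" and A: "A \<in> sets lebesgue" "A \<inter> ball 0 e = {}" "\<And>u. u \<in> A \<Longrightarrow> - u \<in> A"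
  shows "2 * signed_integral A
    = (\<integral>u. indicator A u * ((chi_tilde G u + chi_tilde G (- u)) * K u) \<partial>lebesgue)"
proof -
  have reflect_A: "indicator A (- u) = (indicator A u :: real)" for u
    using A(3)[of u] A(3)[of "- u"] by (auto split: split_indicator)
  note [measurable] = G_sets K_measurable A(1)
  have "signed_integral A = (\<integral>u. indicator A (0 - u) * (chi_tilde G (0 - u) * K (0 - u)) \<partial>lebesgue)"
    unfolding signed_integral_def by (rule integral_reflect_lebesgue[symmetric]) measurable
  also have "\<dots> = (\<integral>u. indicator A u * (chi_tilde G (- u) * K u) \<partial>lebesgue)"
    using reflect_A K_even by simp
  finally have "signed_integral A = \<dots>" .
  moreover have "integrable lebesgue (\<lambda>u. indicator A u * (chi_tilde G (- u) * K u))"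
    by (rule integrable_bounded_mult_K[OF e A(1,2) borel_measurable_chi_tilde_reflect, of 1])
      (simp add: chi_tilde_def)
  ultimately have "2 * signed_integral A = (\<integral>u. indicator A u * (chi_tilde G u * K u)
      + indicator A u * (chi_tilde G (- u) * K u) \<partial>lebesgue)"
    using Bochner_Integration.integral_add[OF integrable_chi_tilde_K[OF e A(1,2)]]
    unfolding signed_integral_def by simp
  then show ?thesis by (simp add: algebra_simps)
qed

lemma signed_integral_symmetric_ge:
  assumes e: "0 < e" and A: "A \<in> sets lebesgue" "A \<inter> ball 0 e = {}" "\<And>u. u \<in> A \<Longrightarrow> - u \<in> A"
  shows "- (\<integral>u. indicator (A \<inter> lens) u * K u \<partial>lebesgue) \<le> signed_integral A"
proof -
  have "- 2 * (\<integral>u. indicator (A \<inter> lens) u * K u \<partial>lebesgue)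
      = (\<integral>u. - 2 * (indicator (A \<inter> lens) u * K u) \<partial>lebesgue)"
    by simp
  also have "\<dots> = (\<integral>u. indicator A u * ((- 2 * indicator lens u) * K u) \<partial>lebesgue)"
    by (intro Bochner_Integration.integral_cong) (auto split: split_indicator)
  also have "\<dots> \<le> (\<integral>u. indicator A u * ((chi_tilde G u + chi_tilde G (- u)) * K u) \<partial>lebesgue)"
  proof (rule integral_mono)
    show "integrable lebesgue (\<lambda>u. indicator A u * ((- 2 * indicator lens u) * K u))"
    proof (rule integrable_bounded_mult_K[OF e A(1,2)])
      show "(\<lambda>u. - 2 * indicator lens u :: real) \<in> borel_measurable lebesgue" by measurable
      show "\<bar>- 2 * indicator lens u :: real\<bar> \<le> 2" for u by (simp split: split_indicator)
    qed
    show "integrable lebesgue (\<lambda>u. indicator A u * ((chi_tilde G u + chi_tilde G (- u)) * K u))"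
      by (rule integrable_bounded_mult_K[OF e A(1,2), of _ 2])
        (use G_sets borel_measurable_chi_tilde_reflect in \<open>auto simp: chi_tilde_def\<close>)
    show "indicator A u * ((- 2 * indicator lens u) * K u)
        \<le> indicator A u * ((chi_tilde G u + chi_tilde G (- u)) * K u)" for u
    proof (cases "u \<in> A")
      case True
      then have "u \<noteq> 0" using A(2) e by auto
      then show ?thesis
        using mult_right_mono[OF chi_tilde_reflect_sum_ge K_nonneg] True by simp
    qed simp
  qed
  also have "\<dots> = 2 * signed_integral A" by (rule signed_integral_symmetric[OF e A, symmetric])
  finally show ?thesis by simp
qed

lemma lens_integral_le:
  assumes e: "0 < e" and \<rho>: "0 < \<rho>" and A: "A \<in> sets lebesgue" "A \<inter> ball 0 e = {}" "A \<subseteq> ball 0 \<rho>"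
  shows "(\<integral>u. indicator (A \<inter> lens) u * K u \<partial>lebesgue)
    \<le> Lam * (lens_const DIM('a) s * \<rho> powr (1 - s) / r)"
proof (rule integral_K_le[OF e])
  have "(\<integral>\<^sup>+u\<in>A \<inter> lens. frac_kernel s u \<partial>lebesgue)
      \<le> (\<integral>\<^sup>+u\<in>- (ball c r \<union> ball (- c) r) \<inter> ball 0 \<rho>. frac_kernel s u \<partial>lebesgue)"
    using A(3) by (intro nn_integral_mono) (auto simp: lens_def split: split_indicator)
  also have "\<dots> \<le> ennreal (lens_const DIM('a) s * \<rho> powr (1 - s) / r)"
    using s_bounds r_pos norm_c \<rho> by (intro nn_integral_frac_kernel_lens) auto
  finally show "(\<integral>\<^sup>+u\<in>A \<inter> lens. frac_kernel s u \<partial>lebesgue)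
      \<le> ennreal (lens_const DIM('a) s * \<rho> powr (1 - s) / r)" .
  show "0 \<le> lens_const DIM('a) s * \<rho> powr (1 - s) / r"
    using lens_const_nonneg[OF s_bounds(2)] r_pos by simp
qed (use A in auto)

lemma nn_integral_frac_kernel_G_outside_ball_le:
  assumes \<rho>: "0 < \<rho>"
  shows "(\<integral>\<^sup>+u\<in>- ball 0 \<rho> \<inter> G. frac_kernel s u \<partial>lebesgue)
    \<le> ennreal (\<rho> powr - (real DIM('a) + s) * measure lebesgue (G \<inter> ball c (2 * r))
        + exterior_const DIM('a) s * r powr - s)"
proof -
  let ?m = "measure lebesgue (G \<inter> ball c (2 * r))"
  have G_ball: "G \<inter> ball c (2 * r) \<in> sets lebesgue" using G_sets by (intro sets.Int) auto
  have "emeasure lebesgue (G \<inter> ball c (2 * r)) \<le> emeasure lebesgue (ball c (2 * r))"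
    using G_ball by (intro emeasure_mono) auto
  also have "\<dots> < \<infinity>" using r_pos emeasure_lebesgue_ball[of "2 * r" c] by simp
  finally have G_ball_measure: "emeasure lebesgue (G \<inter> ball c (2 * r)) = ennreal ?m"
    by (intro emeasure_eq_ennreal_measure) simp
  have "(\<integral>\<^sup>+u\<in>- ball 0 \<rho> \<inter> G. frac_kernel s u \<partial>lebesgue)
      \<le> (\<integral>\<^sup>+u. ennreal (\<rho> powr - (real DIM('a) + s)) * indicator (G \<inter> ball c (2 * r)) u
          + ennreal (frac_kernel s u) * indicator (- ball (0::'a) r) u \<partial>lebesgue)"
  proof (intro nn_integral_mono)
    fix u :: 'a
    show "ennreal (frac_kernel s u) * indicator (- ball 0 \<rho> \<inter> G) u
        \<le> ennreal (\<rho> powr - (real DIM('a) + s)) * indicator (G \<inter> ball c (2 * r)) u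
          + ennreal (frac_kernel s u) * indicator (- ball 0 r) u"
    proof (cases "u \<in> - ball 0 \<rho> \<inter> G")
      case u: True
      show ?thesis
      proof (cases "u \<in> ball c (2 * r)")
        case True
        have "frac_kernel s u \<le> \<rho> powr - (real DIM('a) + s)"
          using u \<rho> s_bounds by (intro powr_mono2') auto
        then show ?thesis using u True by (simp add: ennreal_leI add_increasing2)
      next
        case False
        have "2 * r \<le> norm u + norm c"
          using False norm_triangle_ineq4[of c u] by (simp add: dist_norm)
        then have "u \<in> - ball 0 r" using norm_c by simp
        then show ?thesis using u by simp
      qed
    qed simp
  qed
  also have "\<dots> = ennreal (\<rho> powr - (real DIM('a) + s)) * emeasure lebesgue (G \<inter> ball c (2 * r))
      + (\<integral>\<^sup>+u\<in>- ball (0::'a) r. frac_kernel s u \<partial>lebesgue)"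
    using G_ball
    by (subst nn_integral_add) (auto intro: measurable_completion simp: nn_integral_cmult_indicator)
  also have "\<dots> \<le> ennreal (\<rho> powr - (real DIM('a) + s) * ?m)
      + ennreal (exterior_const DIM('a) s * r powr - s)"
    using nn_integral_frac_kernel_outside_ball[OF s_bounds(1) r_pos, where 'a='a]
    by (intro add_mono) (simp_all add: G_ball_measure ennreal_mult)
  also have "\<dots> = ennreal (\<rho> powr - (real DIM('a) + s) * ?m + exterior_const DIM('a) s * r powr - s)"
    using exterior_const_nonneg[OF s_bounds(1)] by (simp add: ennreal_plus)
  finally show ?thesis .
qed

lemma signed_integral_outside_ball_ge:
  assumes \<rho>: "0 < \<rho>"
  shows "lam * 2 powr - (real DIM('a) + s) * unit_ball_vol DIM('a) * \<rho> powr - s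
      - 2 * Lam * (\<rho> powr - (real DIM('a) + s) * measure lebesgue (G \<inter> ball c (2 * r))
        + exterior_const DIM('a) s * r powr - s)
    \<le> signed_integral (- ball 0 \<rho>)"
proof -
  let ?B = "- ball (0::'a) \<rho>"
  have B: "?B \<in> sets lebesgue" "?B \<inter> ball 0 \<rho> = {}"
    "?B \<inter> G \<in> sets lebesgue" "?B \<inter> G \<inter> ball 0 \<rho> = {}"
    using G_sets by auto
  have "signed_integral ?B
      = (\<integral>u. indicator ?B u * K u - 2 * (indicator (?B \<inter> G) u * K u) \<partial>lebesgue)"
    unfolding signed_integral_def
    by (intro Bochner_Integration.integral_cong) (auto simp: chi_tilde_def split: split_indicator)
  also have "\<dots> = (\<integral>u. indicator ?B u * K u \<partial>lebesgue)
      - 2 * (\<integral>u. indicator (?B \<inter> G) u * K u \<partial>lebesgue)"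
    using integrable_K[OF \<rho> B(1,2)] integrable_K[OF \<rho> B(3,4)] by simp
  finally have split: "signed_integral ?B = \<dots>" .
  have "(\<integral>u. indicator (?B \<inter> G) u * K u \<partial>lebesgue)
      \<le> Lam * (\<rho> powr - (real DIM('a) + s) * measure lebesgue (G \<inter> ball c (2 * r))
        + exterior_const DIM('a) s * r powr - s)"
    using nn_integral_frac_kernel_G_outside_ball_le[OF \<rho>] exterior_const_nonneg[OF s_bounds(1)]
    by (intro integral_K_le[OF \<rho> B(3,4)]) auto
  then show ?thesis using split integral_K_outside_ball_ge[OF \<rho>] by linarith
qed

lemma signed_integral_outside_small_ball_ge:
  assumes e: "0 < e" "e < \<rho>"
  shows "H_lower_bound DIM('a) s lam Lam r (measure lebesgue (G \<inter> ball c (2 * r))) \<rho>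
    \<le> signed_integral (- ball 0 e)"
proof -
  let ?A = "ball 0 \<rho> - ball (0::'a) e"
  have A: "?A \<in> sets lebesgue" "?A \<inter> ball 0 e = {}" "\<And>u. u \<in> ?A \<Longrightarrow> - u \<in> ?A" by auto
  have "- ball (0::'a) e = ?A \<union> - ball 0 \<rho>" using e by auto
  moreover have "signed_integral (?A \<union> - ball 0 \<rho>)
      = signed_integral ?A + signed_integral (- ball 0 \<rho>)"
    using e by (intro signed_integral_Un[OF e(1)]) auto
  ultimately have "signed_integral (- ball 0 e) = signed_integral ?A + signed_integral (- ball 0 \<rho>)"
    by simp
  moreover have "- (Lam * (lens_const DIM('a) s * \<rho> powr (1 - s) / r)) \<le> signed_integral ?A"
  proof -
    have "(\<integral>u. indicator (?A \<inter> lens) u * K u \<partial>lebesgue)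
        \<le> Lam * (lens_const DIM('a) s * \<rho> powr (1 - s) / r)"
      using e by (intro lens_integral_le[OF e(1) _ A(1,2)]) auto
    with signed_integral_symmetric_ge[OF e(1) A] show ?thesis by linarith
  qed
  ultimately show ?thesis
    using signed_integral_outside_ball_ge[of \<rho>] e unfolding H_lower_bound_def by linarith
qed

lemma signed_integral_convergent:
  obtains L where "((\<lambda>e. ereal (signed_integral (- ball 0 e))) \<longlongrightarrow> L) (at_right 0)"
proof -
  \<comment> \<open>Adding \<open>2 * indicator lens\<close> makes \<open>h\<close> nonnegative, so \<open>P\<close> is monotone in \<open>e\<close>.\<close>
  define h where "h u = chi_tilde G u + chi_tilde G (- u) + 2 * indicator lens u" for u
  define P where "P e = (\<integral>u. indicator (ball 0 r - ball 0 e) u * (h u * K u) \<partial>lebesgue)" for e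
  define N where
    "N e = (\<integral>u. indicator (ball 0 r - ball 0 e) u * (indicator lens u * K u) \<partial>lebesgue)" for e
  have h: "h \<in> borel_measurable lebesgue" "0 \<le> h u" "h u \<le> 4" for u
    using chi_tilde_reflect_sum_ge[of u] G_sets borel_measurable_chi_tilde_reflect unfolding h_def
    by (auto simp: chi_tilde_def split: split_indicator)
  have lens_indicator: "(\<lambda>u. indicator lens u :: real) \<in> borel_measurable lebesgue"
    "0 \<le> (indicator lens u :: real)"
    "(indicator lens u :: real) \<le> 1" for u
    by (auto split: split_indicator)
  have decompose: "signed_integral (- ball 0 e) = P e / 2 - N e + signed_integral (- ball 0 r)"
    if e: "0 < e" "e < r" for e
  proof -
    let ?A = "ball 0 r - ball (0::'a) e"
    have A: "?A \<in> sets lebesgue" "?A \<inter> ball 0 e = {}" "\<And>u. u \<in> ?A \<Longrightarrow> - u \<in> ?A" by auto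
    have "- ball (0::'a) e = ?A \<union> - ball 0 r" using e by auto
    moreover have "signed_integral (?A \<union> - ball 0 r)
        = signed_integral ?A + signed_integral (- ball 0 r)"
      using e by (intro signed_integral_Un[OF e(1)]) auto
    moreover have "2 * signed_integral ?A = P e - 2 * N e"
    proof -
      have "2 * signed_integral ?A
          = (\<integral>u. indicator ?A u * ((chi_tilde G u + chi_tilde G (- u)) * K u) \<partial>lebesgue)"
        by (rule signed_integral_symmetric[OF e(1) A(1,2)]) auto
      also have "\<dots> = (\<integral>u. indicator ?A u * (h u * K u)
          - 2 * (indicator ?A u * (indicator lens u * K u)) \<partial>lebesgue)"
        unfolding h_def by (simp add: algebra_simps)
      also have "\<dots> = P e - 2 * N e"
        unfolding P_def N_def using h lens_indicator e
        by (subst Bochner_Integration.integral_diff)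
          (auto intro!: integrable_bounded_mult_K[OF e(1) A(1,2)] simp: abs_le_iff)
      finally show ?thesis .
    qed
    ultimately show ?thesis by simp
  qed
  have P_antitone: "P b / 2 \<le> P a / 2" if "0 < a" "a \<le> b" for a b
    unfolding P_def using integral_annulus_antitone[OF h that] by simp
  have N_antitone: "N b \<le> N a" if "0 < a" "a \<le> b" for a b
    unfolding N_def by (rule integral_annulus_antitone[OF lens_indicator that])
  have N_bounded: "N e \<le> Lam * (lens_const DIM('a) s * r powr (1 - s) / r)" if "0 < e" for e
  proof -
    have "N e = (\<integral>u. indicator ((ball 0 r - ball 0 e) \<inter> lens) u * K u \<partial>lebesgue)"
      unfolding N_def by (intro Bochner_Integration.integral_cong) (auto split: split_indicator)
    also have "\<dots> \<le> Lam * (lens_const DIM('a) s * r powr (1 - s) / r)"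
      using that r_pos by (intro lens_integral_le) auto
    finally show ?thesis .
  qed
  obtain l where "(N \<longlongrightarrow> l) (at_right 0)"
    using antitone_bounded_convergent_at_right[of r N] r_pos N_antitone N_bounded by blast
  then have "((\<lambda>e. ereal (signed_integral (- ball 0 r) - N e))
      \<longlongrightarrow> ereal (signed_integral (- ball 0 r) - l)) (at_right 0)"
    by (intro tendsto_ereal tendsto_diff tendsto_const)
  with antitone_tendsto_SUP_at_right[of r "\<lambda>e. P e / 2"] r_pos P_antitone
  have "((\<lambda>e. ereal (P e / 2) + ereal (signed_integral (- ball 0 r) - N e))
      \<longlongrightarrow> (SUP e\<in>{0<..<r}. ereal (P e / 2)) + ereal (signed_integral (- ball 0 r) - l)) (at_right 0)"
    by (intro tendsto_add_ereal_general1) auto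
  moreover have "\<forall>\<^sub>F e in at_right 0.
      ereal (P e / 2) + ereal (signed_integral (- ball 0 r) - N e) = ereal (signed_integral (- ball 0 e))"
    unfolding eventually_at_right_field using r_pos by (intro exI[of _ r]) (simp add: decompose)
  ultimately show ?thesis using that tendsto_cong by fastforce
qed

end

lemma H_trunc_eq_reflected:
  fixes K :: "'a::euclidean_space \<Rightarrow> real"
  assumes [measurable]: "K \<in> borel_measurable lebesgue" "E \<in> sets lebesgue"
  shows "H_trunc K E x e
    = (\<integral>u. indicator (- ball 0 e) u * (chi_tilde ((\<lambda>u. x - u) -` E) u * K u) \<partial>lebesgue)"
proof -
  have "H_trunc K E x e = (\<integral>y. indicator (- ball x e) y * (chi_tilde E y * K (x - y)) \<partial>lebesgue)"
    unfolding H_trunc_def set_lebesgue_integral_def by simp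
  also have "\<dots> = (\<integral>u. indicator (- ball x e) (x - u)
      * (chi_tilde E (x - u) * K (x - (x - u))) \<partial>lebesgue)"
  proof (rule integral_reflect_lebesgue[symmetric])
    have [measurable]: "(\<lambda>y. K (x - y)) \<in> borel_measurable lebesgue" "ball x e \<in> sets lebesgue"
      using measurable_compose[OF measurable_reflect assms(1)] by auto
    show "(\<lambda>y. indicator (- ball x e) y * (chi_tilde E y * K (x - y))) \<in> borel_measurable lebesgue"
      by measurable
  qed
  also have "\<dots> = (\<integral>u. indicator (- ball 0 e) u * (chi_tilde ((\<lambda>u. x - u) -` E) u * K u) \<partial>lebesgue)"
    by (intro Bochner_Integration.integral_cong)
      (auto simp: chi_tilde_def dist_norm split: split_indicator)
  finally show ?thesis .
qed

lemma (in stable_kernel) H_KE_ge: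
  assumes E: "E \<in> sets lebesgue" and r: "0 < r" and E_ball: "ball x0 r \<subseteq> - E"
    and x: "x \<in> sphere x0 r" and \<rho>: "0 < \<rho>"
  shows "ereal (H_lower_bound DIM('a) s lam Lam r (measure lebesgue (E \<inter> ball x0 (2 * r))) \<rho>)
    \<le> H_KE K E x"
proof -
  define G where "G = (\<lambda>u. x - u) -` E"
  define c where "c = x - x0"
  have "dist x0 (x - u) = dist c u" for u
  proof -
    have "x0 - (x - u) = - (c - u)" unfolding c_def by (simp add: algebra_simps)
    then show ?thesis by (simp only: dist_norm norm_minus_cancel)
  qed
  then have reflect_ball: "(\<lambda>u. x - u) -` ball x0 t = ball c t" for t by auto
  interpret exterior_ball_kernel K s lam Lam G c r
  proof
    show "G \<in> sets lebesgue"
      unfolding G_def using measurable_sets[OF measurable_reflect E, of x] by simp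
    show "norm c = r" using x by (simp add: c_def dist_norm norm_minus_commute)
    show "G \<inter> ball c r = {}" using E_ball by (auto simp: G_def reflect_ball[symmetric])
  qed (rule r)
  have H_trunc: "H_trunc K E x e = signed_integral (- ball 0 e)" for e
    unfolding H_trunc_eq_reflected[OF K_measurable E] signed_integral_def G_def[symmetric] ..
  obtain L where L: "((\<lambda>e. ereal (H_trunc K E x e)) \<longlongrightarrow> L) (at_right 0)"
    using signed_integral_convergent unfolding H_trunc by blast
  have "G \<inter> ball c (2 * r) = (\<lambda>u. x - u) -` (E \<inter> ball x0 (2 * r))"
    by (simp add: G_def reflect_ball vimage_Int)
  moreover have "E \<inter> ball x0 (2 * r) \<in> sets lebesgue" using E by (intro sets.Int) auto
  ultimately have "measure lebesgue (G \<inter> ball c (2 * r)) = measure lebesgue (E \<inter> ball x0 (2 * r))"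
    unfolding measure_def by (simp only: emeasure_reflect_lebesgue)
  then have "\<forall>\<^sub>F e in at_right 0.
      H_lower_bound DIM('a) s lam Lam r (measure lebesgue (E \<inter> ball x0 (2 * r))) \<rho> \<le> H_trunc K E x e"
    unfolding eventually_at_right_field H_trunc
    using \<rho> signed_integral_outside_small_ball_ge by (intro exI[of _ \<rho>]) auto
  then have "ereal (H_lower_bound DIM('a) s lam Lam r (measure lebesgue (E \<inter> ball x0 (2 * r))) \<rho>)
      \<le> L"
    by (intro tendsto_lowerbound[OF L]) auto
  moreover have "H_KE K E x = L"
    unfolding H_KE_def by (rule tendsto_Lim[OF trivial_limit_at_right_real L])
  ultimately show ?thesis by simp
qed

lemma ex_scale_powr_ge:
  fixes a s X :: real
  assumes "0 < a" "0 < s"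
  obtains T where "0 < T" "T \<le> 1" "X \<le> a * T powr - s"
proof
  define Y where "Y = max 1 X"
  let ?T = "min 1 ((a / Y) powr (1 / s))"
  have Y: "0 < Y" "X \<le> Y" unfolding Y_def by auto
  show "0 < ?T" "?T \<le> 1" using assms Y by auto
  have "((a / Y) powr (1 / s)) powr - s \<le> ?T powr - s"
    using assms Y by (intro powr_mono2') auto
  moreover have "((a / Y) powr (1 / s)) powr - s = Y / a"
    using assms Y by (simp add: powr_powr powr_minus_divide)
  ultimately show "X \<le> a * ?T powr - s"
    using assms Y by (simp add: field_simps)
qed

lemma H_lower_bound_rescaled_ge:
  fixes lam Lam M m r T s :: real and n :: nat
  assumes s: "0 < s" "s < 1" and r: "0 < r" and T: "0 < T" "T \<le> 1" and Lam: "0 < Lam"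
    and large: "2 * (M + 1 + Lam * lens_const n s + 2 * Lam * exterior_const n s)
      \<le> lam * 2 powr - (real n + s) * unit_ball_vol n * T powr - s"
    and m: "m \<le> lam * 2 powr - (real n + s) * unit_ball_vol n * T ^ n * r ^ n / (4 * Lam)"
  shows "(M + 1) * r powr - s \<le> H_lower_bound n s lam Lam r m (T * r)"
proof -
  define a where "a = lam * 2 powr - (real n + s) * unit_ball_vol n"
  define lc where "lc = lens_const n s"
  define ec where "ec = exterior_const n s"
  define R where "R = r powr - s"
  have lc: "0 \<le> lc" unfolding lc_def using s by (simp add: lens_const_nonneg)
  have R: "0 < R" unfolding R_def using r by simp
  have main: "a * (T * r) powr - s = a * T powr - s * R"
    unfolding R_def using T r by (simp add: powr_mult)
  have "(T * r) powr (1 - s) / r = T powr (1 - s) * R"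
    unfolding R_def using T r by (simp add: powr_mult powr_diff powr_minus_divide)
  also have "\<dots> \<le> 1 powr (1 - s) * R" using T s R by (intro mult_right_mono powr_mono2) auto
  also have "\<dots> = R" by simp
  finally have "Lam * lc * ((T * r) powr (1 - s) / r) \<le> Lam * lc * R"
    using Lam lc by (intro mult_left_mono) auto
  then have lens: "Lam * (lc * (T * r) powr (1 - s) / r) \<le> Lam * lc * R"
    by (simp add: algebra_simps)
  have "Lam * ((T * r) powr - (real n + s) * m)
      \<le> Lam * ((T * r) powr - (real n + s) * (a * T ^ n * r ^ n / (4 * Lam)))"
    using m Lam unfolding a_def by (intro mult_left_mono) auto
  also have "\<dots> = a * ((T * r) powr - (real n + s) * (T * r) powr real n) / 4"
    using Lam T r by (simp add: powr_realpow power_mult_distrib)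
  also have "\<dots> = a * (T * r) powr - s / 4"
    by (simp add: powr_add[symmetric])
  also have "\<dots> = a * T powr - s * R / 4"
    unfolding R_def using T r by (simp add: powr_mult)
  finally have small: "Lam * ((T * r) powr - (real n + s) * m) \<le> a * T powr - s * R / 4" .
  have "(M + 1) * R \<le> (a * T powr - s / 2 - Lam * lc - 2 * Lam * ec) * R"
    using large R unfolding a_def lc_def ec_def by (intro mult_right_mono) auto
  moreover have "(a * T powr - s / 2 - Lam * lc - 2 * Lam * ec) * R
      = a * T powr - s * R / 2 - Lam * lc * R - 2 * (Lam * ec * R)"
    by (simp add: algebra_simps)
  moreover have "2 * Lam * ((T * r) powr - (real n + s) * m + ec * R)
      = 2 * (Lam * ((T * r) powr - (real n + s) * m)) + 2 * (Lam * ec * R)"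
    by (simp add: algebra_simps)
  ultimately show ?thesis
    using main lens small unfolding H_lower_bound_def a_def[symmetric] lc_def[symmetric]
      ec_def[symmetric] R_def[symmetric] by linarith
qed

lemma stable_kernelI:
  fixes K :: "'a::euclidean_space \<Rightarrow> real"
  assumes "K \<in> borel_measurable lebesgue"
    and "\<forall>y. y \<noteq> 0 \<longrightarrow> lam * frac_kernel s y \<le> K y \<and> K y \<le> Lam * frac_kernel s y \<and> K y = K (- y)"
    and "0 < s" "s < 1" "0 < lam" "lam \<le> Lam"
  shows "stable_kernel K s lam Lam"
proof
  show "lam * frac_kernel s y \<le> K y" "K y \<le> Lam * frac_kernel s y" if "y \<noteq> 0" for y
    using assms(2) that by blast+
  show "K (- y) = K y" for y using assms(2) by (metis minus_zero)
qed (use assms(1,3-6) in auto)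

lemma (in stable_kernel) H_KE_ge_of_small_density:
  assumes "E \<in> sets lebesgue" "0 < r" "ball x0 r \<subseteq> - E" "x \<in> sphere x0 r" "0 < T" "T \<le> 1"
    and "2 * (M + 1 + Lam * lens_const DIM('a) s + 2 * Lam * exterior_const DIM('a) s)
      \<le> lam * 2 powr - (real DIM('a) + s) * unit_ball_vol DIM('a) * T powr - s"
    and "measure lebesgue (E \<inter> ball x0 (2 * r))
      \<le> lam * 2 powr - (real DIM('a) + s) * T ^ DIM('a) / (4 * Lam * 2 ^ DIM('a))
        * measure lebesgue (ball x0 (2 * r))"
  shows "ereal ((M + 1) * r powr - s) \<le> H_KE K E x"
proof -
  have "lam * 2 powr - (real DIM('a) + s) * T ^ DIM('a) / (4 * Lam * 2 ^ DIM('a))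
        * measure lebesgue (ball x0 (2 * r))
      = lam * 2 powr - (real DIM('a) + s) * unit_ball_vol DIM('a) * T ^ DIM('a) * r ^ DIM('a)
        / (4 * Lam)"
    using assms(2) lam_bounds by (simp add: content_ball power_mult_distrib field_simps)
  then have "(M + 1) * r powr - s
      \<le> H_lower_bound DIM('a) s lam Lam r (measure lebesgue (E \<inter> ball x0 (2 * r))) (T * r)"
    using s_bounds lam_bounds assms by (intro H_lower_bound_rescaled_ge) auto
  also have "ereal \<dots> \<le> H_KE K E x"
    using assms by (intro H_KE_ge) auto
  finally show ?thesis by simp
qed

theorem lemma3p3:
  fixes s lam Lam M :: real
  assumes "0 < s" "s < 1" "0 < lam" "lam \<le> Lam" "0 \<le> M"
  shows "\<exists>\<beta>>0. \<forall>(K :: 'a::euclidean_space \<Rightarrow> real) E x0 r x.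
     K \<in> borel_measurable lebesgue \<longrightarrow>
     (\<forall>y. y \<noteq> 0 \<longrightarrow> lam * norm y powr (- (real DIM('a) + s)) \<le> K y
                    \<and> K y \<le> Lam * norm y powr (- (real DIM('a) + s))
                    \<and> K y = K (- y)) \<longrightarrow>
     E \<in> sets borel \<longrightarrow>
     0 < r \<longrightarrow> ball x0 r \<subseteq> - E \<longrightarrow>
     x \<in> frontier E \<inter> frontier (ball x0 r) \<longrightarrow>
     measure lebesgue (E \<inter> ball x0 (2 * r)) \<le> \<beta> * measure lebesgue (ball x0 (2 * r)) \<longrightarrow>
     H_KE K E x \<ge> ereal ((M + 1) * r powr (- s))"
proof -
  have "0 < lam * 2 powr - (real DIM('a) + s) * unit_ball_vol DIM('a)" using assms(3) by simp
  then obtain T where T: "0 < T" "T \<le> 1" and large: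
    "2 * (M + 1 + Lam * lens_const DIM('a) s + 2 * Lam * exterior_const DIM('a) s)
      \<le> lam * 2 powr - (real DIM('a) + s) * unit_ball_vol DIM('a) * T powr - s"
    using ex_scale_powr_ge assms(1) by metis
  \<comment> \<open>This makes the \<open>G\<close>-term of \<open>H_lower_bound\<close> at most half of the main term.\<close>
  define \<beta> where "\<beta> = lam * 2 powr - (real DIM('a) + s) * T ^ DIM('a) / (4 * Lam * 2 ^ DIM('a))"
  have "0 < \<beta>" using T assms(3,4) unfolding \<beta>_def by simp
  moreover have "ereal ((M + 1) * r powr - s) \<le> H_KE K E x"
    if K: "K \<in> borel_measurable lebesgue"
      "\<forall>y. y \<noteq> 0 \<longrightarrow> lam * frac_kernel s y \<le> K y \<and> K y \<le> Lam * frac_kernel s y \<and> K y = K (- y)"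
      and E: "E \<in> sets borel" "0 < r" "ball x0 r \<subseteq> - E" and x: "x \<in> frontier (ball x0 r)"
      and small: "measure lebesgue (E \<inter> ball x0 (2 * r)) \<le> \<beta> * measure lebesgue (ball x0 (2 * r))"
    for K :: "'a \<Rightarrow> real" and E x0 r x
    using E x T large small unfolding \<beta>_def
    by (intro stable_kernel.H_KE_ge_of_small_density[OF stable_kernelI[OF K assms(1-4)]])
      (auto simp: frontier_ball)
  ultimately show ?thesis by blast
qed

end
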